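(* Let $G$ be the graph with vertex set $\{1,\dots,12\}$ and edge set consisting of $12,23,34$; $87,76,65$; $12\text{-}11, 11\text{-}10, 10\text{-}9$; $12\text{-}8, 8\text{-}11, 11\text{-}6, 6\text{-}9, 9\text{-}5, 5\text{-}10, 10\text{-}7, 7\text{-}12$; $17, 73, 35$; $82, 26, 64$; $27$; $36$; and all eight edges between $\{2,3\}$ and $\{9,10,11,12\}$. Then: $G$ is prime, $\{P_5,\overline{P_5},C_5\}$-free and not a split graph; $G$ is isomorphic to $\overline{G}$ via the map $1\mapsto3,2\mapsto1,3\mapsto4,4\mapsto2,5\mapsto7,6\mapsto5,7\mapsto8,8\mapsto6,9\mapsto11,10\mapsto9,11\mapsto12,12\mapsto10$; the simplicial vertices of $G$ are exactly $1,4$ and the antisimplicial vertices of $G$ are exactly $2,3$; and there is no $F\in\{G,\overline{G}\}$ with an induced subgraph of $F$ isomorphic to $H_6$ whose two degree-one vertices are simplicial in $F$ and whose two degree-three vertices are both antisimplicial in $F$.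
   Context: All graphs are finite and simple; in the edge list "$a\text{-}b$" or "$ab$" denotes an edge between vertices $a$ and $b$. $P_n$ is the path on $n$ vertices, $C_n$ the cycle of length $n$, $\overline{G}$ the complement. $G$ is $H$-free if it has no induced subgraph isomorphic to $H$. A vertex $b\notin X$ is mixed on $X$ if it has both a neighbor and a non-neighbor in $X$. A homogeneous set is a set $X\subseteq V(G)$ with $1<|X|<|V(G)|$ such that no vertex outside $X$ is mixed on $X$. $G$ is prime if $|V(G)|\ge4$ and has no homogeneous set. A vertex $v$ is simplicial if $N(v)$ is a clique, antisimplicial if $V(G)\setminus N(v)$ is a stable set. A split graph is one whose vertex set can be partitioned into a stable set and a clique. $H_6$ is the graph with vertex set $\{v_1,\dots,v_6\}$ and edge set $\{v_1v_2,v_2v_3,v_3v_4,v_2v_5,v_3v_6,v_5v_6\}$. *)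

theory Defs
  imports Main
begin

definition simple_graph :: "'a set \<Rightarrow> ('a \<Rightarrow> 'a \<Rightarrow> bool) \<Rightarrow> bool" where
  "simple_graph V E \<longleftrightarrow> finite V \<and> (\<forall>x\<in>V. \<forall>y\<in>V. E x y \<longleftrightarrow> E y x) \<and> (\<forall>x\<in>V. \<not> E x x)"

definition compl_rel :: "('a \<Rightarrow> 'a \<Rightarrow> bool) \<Rightarrow> 'a \<Rightarrow> 'a \<Rightarrow> bool" where
  "compl_rel E x y \<longleftrightarrow> x \<noteq> y \<and> \<not> E x y"

definition graph_iso :: "('a \<Rightarrow> 'b) \<Rightarrow> 'a set \<Rightarrow> ('a \<Rightarrow> 'a \<Rightarrow> bool) \<Rightarrow> 'b set \<Rightarrow> ('b \<Rightarrow> 'b \<Rightarrow> bool) \<Rightarrow> bool" where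
  "graph_iso f V1 E1 V2 E2 \<longleftrightarrow> bij_betw f V1 V2 \<and> (\<forall>x\<in>V1. \<forall>y\<in>V1. E1 x y \<longleftrightarrow> E2 (f x) (f y))"

definition induced_embedding :: "('b \<Rightarrow> 'a) \<Rightarrow> 'b set \<Rightarrow> ('b \<Rightarrow> 'b \<Rightarrow> bool) \<Rightarrow> 'a set \<Rightarrow> ('a \<Rightarrow> 'a \<Rightarrow> bool) \<Rightarrow> bool" where
  "induced_embedding f VH EH V E \<longleftrightarrow> graph_iso f VH EH (f ` VH) E \<and> f ` VH \<subseteq> V"

definition H_free :: "'b set \<Rightarrow> ('b \<Rightarrow> 'b \<Rightarrow> bool) \<Rightarrow> 'a set \<Rightarrow> ('a \<Rightarrow> 'a \<Rightarrow> bool) \<Rightarrow> bool" where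
  "H_free VH EH V E \<longleftrightarrow> \<not> (\<exists>f. induced_embedding f VH EH V E)"

definition P_rel :: "nat \<Rightarrow> nat \<Rightarrow> bool" where
  "P_rel i j \<longleftrightarrow> i = j + 1 \<or> j = i + 1"
definition C5_rel :: "nat \<Rightarrow> nat \<Rightarrow> bool" where
  "C5_rel i j \<longleftrightarrow> i = (j + 1) mod 5 \<or> j = (i + 1) mod 5"

abbreviation P5_V :: "nat set" where "P5_V \<equiv> {0..<5}"
abbreviation P5_E :: "nat \<Rightarrow> nat \<Rightarrow> bool" where "P5_E \<equiv> P_rel"
abbreviation coP5_E :: "nat \<Rightarrow> nat \<Rightarrow> bool" where "coP5_E \<equiv> compl_rel P_rel"
abbreviation C5_V :: "nat set" where "C5_V \<equiv> {0..<5}"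
abbreviation C5_E :: "nat \<Rightarrow> nat \<Rightarrow> bool" where "C5_E \<equiv> C5_rel"

definition H6_rel :: "nat \<Rightarrow> nat \<Rightarrow> bool" where
  "H6_rel x y \<longleftrightarrow> {x, y} \<in> {{1,2},{2,3},{3,4},{2,5},{3,6},{5,6}}"
abbreviation H6_V :: "nat set" where "H6_V \<equiv> {1..6}"

definition mixed_on :: "'a set \<Rightarrow> ('a \<Rightarrow> 'a \<Rightarrow> bool) \<Rightarrow> 'a \<Rightarrow> 'a set \<Rightarrow> bool" where
  "mixed_on V E b X \<longleftrightarrow> b \<in> V \<and> b \<notin> X \<and> (\<exists>x\<in>X. E b x) \<and> (\<exists>x\<in>X. \<not> E b x)"

definition homogeneous_set :: "'a set \<Rightarrow> ('a \<Rightarrow> 'a \<Rightarrow> bool) \<Rightarrow> 'a set \<Rightarrow> bool" where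
  "homogeneous_set V E X \<longleftrightarrow> X \<subseteq> V \<and> 1 < card X \<and> card X < card V \<and>
     (\<forall>b\<in>V - X. \<not> mixed_on V E b X)"

definition prime_graph :: "'a set \<Rightarrow> ('a \<Rightarrow> 'a \<Rightarrow> bool) \<Rightarrow> bool" where
  "prime_graph V E \<longleftrightarrow> card V \<ge> 4 \<and> \<not> (\<exists>X. homogeneous_set V E X)"

definition nbhd :: "'a set \<Rightarrow> ('a \<Rightarrow> 'a \<Rightarrow> bool) \<Rightarrow> 'a \<Rightarrow> 'a set" where
  "nbhd V E v = {u\<in>V. E v u}"

definition is_clique :: "('a \<Rightarrow> 'a \<Rightarrow> bool) \<Rightarrow> 'a set \<Rightarrow> bool" where
  "is_clique E K \<longleftrightarrow> (\<forall>x\<in>K. \<forall>y\<in>K. x \<noteq> y \<longrightarrow> E x y)"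

definition is_stable :: "('a \<Rightarrow> 'a \<Rightarrow> bool) \<Rightarrow> 'a set \<Rightarrow> bool" where
  "is_stable E S \<longleftrightarrow> (\<forall>x\<in>S. \<forall>y\<in>S. \<not> E x y)"

definition simplicial :: "'a set \<Rightarrow> ('a \<Rightarrow> 'a \<Rightarrow> bool) \<Rightarrow> 'a \<Rightarrow> bool" where
  "simplicial V E v \<longleftrightarrow> v \<in> V \<and> is_clique E (nbhd V E v)"

definition antisimplicial :: "'a set \<Rightarrow> ('a \<Rightarrow> 'a \<Rightarrow> bool) \<Rightarrow> 'a \<Rightarrow> bool" where
  "antisimplicial V E v \<longleftrightarrow> v \<in> V \<and> is_stable E (V - nbhd V E v)"

definition split_graph :: "'a set \<Rightarrow> ('a \<Rightarrow> 'a \<Rightarrow> bool) \<Rightarrow> bool" where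
  "split_graph V E \<longleftrightarrow> (\<exists>S K. S \<union> K = V \<and> S \<inter> K = {} \<and> is_stable E S \<and> is_clique E K)"

definition G_edges :: "(nat \<times> nat) set" where
  "G_edges = {(1,2),(2,3),(3,4),(8,7),(7,6),(6,5),(12,11),(11,10),(10,9),
              (12,8),(8,11),(11,6),(6,9),(9,5),(5,10),(10,7),(7,12),
              (1,7),(7,3),(3,5),(8,2),(2,6),(6,4),(2,7),(3,6)}
             \<union> {2,3} \<times> {9,10,11,12}"

definition G_V :: "nat set" where "G_V = {1..12}"

definition G_E :: "nat \<Rightarrow> nat \<Rightarrow> bool" where
  "G_E x y \<longleftrightarrow> (x, y) \<in> G_edges \<or> (y, x) \<in> G_edges"

definition phi :: "nat \<Rightarrow> nat" where
  "phi x = (case map_of [(1,3),(2,1),(3,4),(4,2),(5,7),(6,5),(7,8),(8,6),(9,11),(10,9),(11,12),(12,10)] x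
            of Some y \<Rightarrow> y | None \<Rightarrow> x)"

end

theory Submission
  imports Defs
begin

text \<open>Every claim is a finite check on twelve vertices; the work lies in replacing the quantifiers
over maps and vertex sets in the definitions by computations the simplifier can carry out.
Induced copies of a small graph are found by a backtracking search that extends a partial
embedding one pattern vertex at a time, each pattern vertex coming with a list of candidate
images; restricting the candidates for the ends and the middle of \<open>H\<^sub>6\<close> to the simplicial and
antisimplicial vertices makes the last claim cheap. A homogeneous set containing two vertices
contains every vertex mixed on them, so \<open>G\<close> is prime as soon as the closure of every pair
under adding mixed vertices is the whole vertex set. The induced \<open>C\<^sub>4\<close> 2-6-5-10 rules out a split
partition, and in the complement of a simple graph simplicial and antisimplicial vertices
swap roles.\<close>

text \<open>A partial embedding is a list of pairs (pattern vertex, image). Here and in \<open>mixed\<close> below,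
\<open>if\<close> is used rather than \<open>\<and>\<close> so that the simplifier abandons a test at its first failure.\<close>

fun compatible :: "('a \<Rightarrow> 'a \<Rightarrow> bool) \<Rightarrow> ('b \<Rightarrow> 'b \<Rightarrow> bool) \<Rightarrow> ('b \<times> 'a) list \<Rightarrow> 'b \<Rightarrow> 'a \<Rightarrow> bool" where
  "compatible E H [] h v = True"
| "compatible E H ((h', v') # m) h v =
     (if v \<noteq> v' \<and> E v v' = H h h' then compatible E H m h v else False)"

fun has_induced_copy ::
  "('a \<Rightarrow> 'a \<Rightarrow> bool) \<Rightarrow> ('b \<Rightarrow> 'b \<Rightarrow> bool) \<Rightarrow> ('b \<times> 'a) list \<Rightarrow> ('b \<times> 'a list) list \<Rightarrow> bool" where
  "has_induced_copy E H m [] = True"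
| "has_induced_copy E H m ((h, []) # hs) = False"
| "has_induced_copy E H m ((h, v # C) # hs) =
     ((if compatible E H m h v then has_induced_copy E H ((h, v) # m) hs else False)
      \<or> has_induced_copy E H m ((h, C) # hs))"

lemma compatible_iff: "compatible E H m h v \<longleftrightarrow> (\<forall>(h', v') \<in> set m. v \<noteq> v' \<and> E v v' = H h h')"
  by (induction m) (auto split: if_splits)

lemma has_induced_copy_if_embedding:
  assumes "distinct (ks @ map fst hs)"
    and "inj_on f (set ks \<union> fst ` set hs)"
    and "\<forall>x \<in> set ks \<union> fst ` set hs. \<forall>y \<in> set ks \<union> fst ` set hs. H x y \<longleftrightarrow> E (f x) (f y)"
    and "\<forall>(h, C) \<in> set hs. f h \<in> set C"
  shows "has_induced_copy E H (map (\<lambda>k. (k, f k)) ks) hs"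
  using assms
proof (induction E H "map (\<lambda>k. (k, f k)) ks" hs arbitrary: ks rule: has_induced_copy.induct)
  case (3 E H h v C hs)
  show ?case
  proof (cases "f h = v")
    case True
    have compat: "compatible E H (map (\<lambda>k. (k, f k)) ks) h v"
      unfolding compatible_iff True[symmetric] using 3(3-5) by (auto simp: inj_on_eq_iff)
    moreover have "has_induced_copy E H (map (\<lambda>k. (k, f k)) (h # ks)) hs"
      by (rule "3.hyps"(1)[OF compat]) (use 3(3-6) True in auto)
    ultimately show ?thesis using True by simp
  next
    case False
    have "has_induced_copy E H (map (\<lambda>k. (k, f k)) ks) ((h, C) # hs)"
      by (rule "3.hyps"(2)) (use 3(3-6) False in auto)
    then show ?thesis by simp
  qed
qed auto

lemma induced_embedding_misses_candidates:
  assumes "\<not> has_induced_copy E H [] hs" and "distinct (map fst hs)"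
    and "induced_embedding f (fst ` set hs) H V E"
  shows "\<exists>(h, C) \<in> set hs. f h \<notin> set C"
proof (rule ccontr)
  assume "\<not> ?thesis"
  moreover have "inj_on f (fst ` set hs)"
    and "\<forall>x \<in> fst ` set hs. \<forall>y \<in> fst ` set hs. H x y \<longleftrightarrow> E (f x) (f y)"
    using assms(3) by (auto simp: induced_embedding_def graph_iso_def bij_betw_def)
  ultimately have "has_induced_copy E H (map (\<lambda>k. (k, f k)) []) hs"
    using assms(2) by (intro has_induced_copy_if_embedding) auto
  with assms(1) show False by simp
qed

lemma H_free_if_no_induced_copy:
  assumes "\<not> has_induced_copy E H [] (map (\<lambda>h. (h, V)) hs)" and "distinct hs"
  shows "H_free (set hs) H (set V) E"
  unfolding H_free_def
proof
  assume "\<exists>f. induced_embedding f (set hs) H (set V) E"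
  then obtain f where f: "induced_embedding f (set hs) H (set V) E" ..
  then have "f ` set hs \<subseteq> set V" by (simp add: induced_embedding_def)
  moreover have "\<exists>(h, C) \<in> set (map (\<lambda>h. (h, V)) hs). f h \<notin> set C"
    using induced_embedding_misses_candidates[OF assms(1)] f assms(2)
    by (simp add: image_image comp_def)
  ultimately show False by auto
qed

definition mixed :: "('a \<Rightarrow> 'a \<Rightarrow> bool) \<Rightarrow> 'a list \<Rightarrow> 'a \<Rightarrow> bool" where
  "mixed E S c \<longleftrightarrow> (if c \<in> set S then False else list_ex (E c) S \<and> \<not> list_all (E c) S)"

fun mixed_vertices :: "('a \<Rightarrow> 'a \<Rightarrow> bool) \<Rightarrow> 'a list \<Rightarrow> 'a list \<Rightarrow> 'a list" where
  "mixed_vertices E S [] = []"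
| "mixed_vertices E S (c # cs) =
     (if mixed E S c then c # mixed_vertices E S cs else mixed_vertices E S cs)"

fun mixed_closure :: "nat \<Rightarrow> 'a list \<Rightarrow> ('a \<Rightarrow> 'a \<Rightarrow> bool) \<Rightarrow> 'a list \<Rightarrow> 'a list" where
  "mixed_closure 0 V E S = S"
| "mixed_closure (Suc n) V E S =
     (case mixed_vertices E S V of [] \<Rightarrow> S | M \<Rightarrow> mixed_closure n V E (M @ S))"

lemma set_mixed_vertices: "set (mixed_vertices E S V) = {c. mixed_on (set V) E c (set S)}"
  by (induction V) (auto simp: mixed_def mixed_on_def list_ex_iff list_all_iff)

lemma mixed_vertices_subset_homogeneous:
  assumes "homogeneous_set (set V) E X" and "set S \<subseteq> X"
  shows "set (mixed_vertices E S V) \<subseteq> X"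
  using assms unfolding set_mixed_vertices homogeneous_set_def mixed_on_def by blast

lemma mixed_closure_subset_homogeneous:
  assumes "homogeneous_set (set V) E X" and "set S \<subseteq> X"
  shows "set (mixed_closure n V E S) \<subseteq> X"
  using assms(2)
proof (induction n arbitrary: S)
  case (Suc n)
  have "set (mixed_vertices E S V @ S) \<subseteq> X"
    using Suc.prems mixed_vertices_subset_homogeneous[OF assms(1)] by simp
  then have "set (mixed_closure n V E (mixed_vertices E S V @ S)) \<subseteq> X"
    by (rule Suc.IH)
  with Suc.prems show ?case by (auto split: list.split)
qed simp

fun upper_pairs :: "'a list \<Rightarrow> ('a \<times> 'a) list" where
  "upper_pairs [] = []"
| "upper_pairs (a # V) = map (Pair a) V @ upper_pairs V"

lemma upper_pairs_cover:
  assumes "a \<in> set V" "b \<in> set V" "a \<noteq> b"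
  shows "(a, b) \<in> set (upper_pairs V) \<or> (b, a) \<in> set (upper_pairs V)"
  using assms by (induction V) auto

fun pair_closures_cover :: "'a list \<Rightarrow> ('a \<Rightarrow> 'a \<Rightarrow> bool) \<Rightarrow> ('a \<times> 'a) list \<Rightarrow> bool" where
  "pair_closures_cover V E [] = True"
| "pair_closures_cover V E ((a, b) # ps) =
     (set V \<subseteq> set (mixed_closure (length V) V E [a, b]) \<and> pair_closures_cover V E ps)"

lemma prime_graph_if_pair_closures_cover:
  assumes "4 \<le> card (set V)" and "pair_closures_cover V E (upper_pairs V)"
  shows "prime_graph (set V) E"
  unfolding prime_graph_def
proof (intro conjI notI)
  assume "\<exists>X. homogeneous_set (set V) E X"
  then obtain X where X: "homogeneous_set (set V) E X" ..
  then have "X \<subseteq> set V" "1 < card X" "card X < card (set V)"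
    by (auto simp: homogeneous_set_def)
  moreover from \<open>X \<subseteq> set V\<close> have "finite X"
    using finite_subset by blast
  ultimately obtain a b where ab: "a \<in> X" "b \<in> X" "a \<noteq> b"
    by (metis One_nat_def card_le_Suc0_iff_eq not_le)
  have closed: "set V \<subseteq> set (mixed_closure (length V) V E [x, y])"
    if "(x, y) \<in> set ps" "pair_closures_cover V E ps" for x y ps
    using that by (induction V E ps rule: pair_closures_cover.induct) auto
  obtain x y where "{x, y} = {a, b}" "(x, y) \<in> set (upper_pairs V)"
    using upper_pairs_cover[of a V b] ab \<open>X \<subseteq> set V\<close> by blast
  moreover from this(1) ab have "set [x, y] \<subseteq> X" by auto
  ultimately have "set V \<subseteq> X"
    using closed[OF _ assms(2)] mixed_closure_subset_homogeneous[OF X] by blast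
  with \<open>card X < card (set V)\<close> \<open>X \<subseteq> set V\<close> show False
    using card_mono[of X "set V"] by auto
qed (rule assms(1))

lemma not_split_graph_if_induced_C4:
  assumes "{a, b, c, d} \<subseteq> V" and "E a b" "E b c" "E c d" "E d a"
    and "a \<noteq> c" "b \<noteq> d" "\<not> E a c" "\<not> E b d"
  shows "\<not> split_graph V E"
proof
  assume "split_graph V E"
  then obtain S K where SK: "S \<union> K = V" "is_stable E S" "is_clique E K"
    unfolding split_graph_def by blast
  have "a \<in> S \<or> c \<in> S" "b \<in> S \<or> d \<in> S"
    using SK assms unfolding is_clique_def by blast+
  then show False
    using SK(2) assms(2-5) unfolding is_stable_def by blast
qed

lemma is_stable_compl_iff_is_clique: "is_stable (compl_rel E) A \<longleftrightarrow> is_clique E A"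
  by (auto simp: is_stable_def is_clique_def compl_rel_def)

lemma is_clique_compl_iff_is_stable:
  assumes "\<forall>x\<in>A. \<not> E x x"
  shows "is_clique (compl_rel E) A \<longleftrightarrow> is_stable E A"
  using assms unfolding is_stable_def is_clique_def compl_rel_def by metis

lemma is_stable_insert:
  "is_stable E (insert v A) \<longleftrightarrow> \<not> E v v \<and> (\<forall>y\<in>A. \<not> E v y \<and> \<not> E y v) \<and> is_stable E A"
  by (auto simp: is_stable_def)

lemma is_clique_insert:
  "is_clique E (insert v A) \<longleftrightarrow> (\<forall>y\<in>A. y \<noteq> v \<longrightarrow> E v y \<and> E y v) \<and> is_clique E A"
  by (auto simp: is_clique_def)

lemma simplicial_compl_iff_antisimplicial:
  assumes "simple_graph V E" and "v \<in> V"
  shows "simplicial V (compl_rel E) v \<longleftrightarrow> antisimplicial V E v"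
proof -
  let ?N = "nbhd V (compl_rel E) v"
  have irr: "\<forall>x\<in>V. \<not> E x x" and sym: "\<forall>x\<in>V. \<forall>y\<in>V. E x y \<longleftrightarrow> E y x"
    using assms(1) by (auto simp: simple_graph_def)
  have "V - nbhd V E v = insert v ?N"
    using assms(2) irr by (auto simp: nbhd_def compl_rel_def)
  moreover have "\<forall>y\<in>?N. \<not> E v y \<and> \<not> E y v"
    using assms(2) sym by (auto simp: nbhd_def compl_rel_def)
  moreover have "is_clique (compl_rel E) ?N \<longleftrightarrow> is_stable E ?N"
    using irr by (intro is_clique_compl_iff_is_stable) (auto simp: nbhd_def)
  ultimately show ?thesis
    using assms(2) irr by (simp add: simplicial_def antisimplicial_def is_stable_insert)
qed

lemma antisimplicial_compl_iff_simplicial: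
  assumes "simple_graph V E" and "v \<in> V"
  shows "antisimplicial V (compl_rel E) v \<longleftrightarrow> simplicial V E v"
proof -
  let ?N = "nbhd V E v"
  have sym: "\<forall>x\<in>V. \<forall>y\<in>V. E x y \<longleftrightarrow> E y x"
    using assms(1) by (auto simp: simple_graph_def)
  have "V - nbhd V (compl_rel E) v = insert v ?N"
    using assms(2) by (auto simp: nbhd_def compl_rel_def)
  moreover have "\<forall>y\<in>?N. y \<noteq> v \<longrightarrow> E v y \<and> E y v"
    using assms(2) sym by (auto simp: nbhd_def)
  ultimately show ?thesis
    using assms(2)
    by (simp add: simplicial_def antisimplicial_def is_stable_compl_iff_is_clique is_clique_insert)
qed

lemma simplicial_vertices_list:
  "{v \<in> set V. simplicial (set V) E v} =
     set (filter (\<lambda>v. let N = filter (E v) V in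
       list_all (\<lambda>x. list_all (\<lambda>y. x = y \<or> E x y) N) N) V)"
  by (auto simp: simplicial_def nbhd_def is_clique_def list_all_iff)

lemma antisimplicial_vertices_list:
  "{v \<in> set V. antisimplicial (set V) E v} =
     set (filter (\<lambda>v. let A = filter (\<lambda>u. \<not> E v u) V in
       list_all (\<lambda>x. list_all (\<lambda>y. \<not> E x y) A) A) V)"
  by (auto simp: antisimplicial_def nbhd_def is_stable_def list_all_iff)

lemma G_V_eq: "G_V = set [1, 2, 3, 4, 5, 6, 7, 8, 9, 10, 11, 12]"
  unfolding G_V_def by code_simp

text \<open>The simplifier rewrites the vertex \<open>1\<close> to \<open>Suc 0\<close>, where these rules no longer apply;
hence \<open>del: One_nat_def\<close> in the computations below.\<close>

lemma G_E_neighbours: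
  "G_E 1 y \<longleftrightarrow> y \<in> {2, 7}"
  "G_E 2 y \<longleftrightarrow> y \<in> {1, 3, 6, 7, 8, 9, 10, 11, 12}"
  "G_E 3 y \<longleftrightarrow> y \<in> {2, 4, 5, 6, 7, 9, 10, 11, 12}"
  "G_E 4 y \<longleftrightarrow> y \<in> {3, 6}"
  "G_E 5 y \<longleftrightarrow> y \<in> {3, 6, 9, 10}"
  "G_E 6 y \<longleftrightarrow> y \<in> {2, 3, 4, 5, 7, 9, 11}"
  "G_E 7 y \<longleftrightarrow> y \<in> {1, 2, 3, 6, 8, 10, 12}"
  "G_E 8 y \<longleftrightarrow> y \<in> {2, 7, 11, 12}"
  "G_E 9 y \<longleftrightarrow> y \<in> {2, 3, 5, 6, 10}"
  "G_E 10 y \<longleftrightarrow> y \<in> {2, 3, 5, 7, 9, 11}"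
  "G_E 11 y \<longleftrightarrow> y \<in> {2, 3, 6, 8, 10, 12}"
  "G_E 12 y \<longleftrightarrow> y \<in> {2, 3, 7, 8, 11}"
  by (auto simp: G_E_def G_edges_def)

lemma G_simple: "simple_graph G_V G_E"
  by (auto simp: simple_graph_def G_V_def G_E_def G_edges_def)

lemma G_prime: "prime_graph G_V G_E"
  unfolding G_V_eq
  by (rule prime_graph_if_pair_closures_cover)
    (simp_all add: G_E_neighbours mixed_def del: One_nat_def)

lemma G_H_free_if_no_induced_copy:
  fixes H :: "nat \<Rightarrow> nat \<Rightarrow> bool"
  assumes "\<not> has_induced_copy G_E H []
    (map (\<lambda>h. (h, [1, 2, 3, 4, 5, 6, 7, 8, 9, 10, 11, 12])) [0, 1, 2, 3, 4])"
  shows "H_free {0..<5} H G_V G_E"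
proof -
  have "{0..<5} = set [0, 1, 2, 3, 4 :: nat]" by code_simp
  then show ?thesis
    unfolding G_V_eq by (simp only:) (rule H_free_if_no_induced_copy[OF assms], simp)
qed

lemma G_P5_free: "H_free P5_V P5_E G_V G_E"
  by (rule G_H_free_if_no_induced_copy) (simp add: G_E_neighbours P_rel_def del: One_nat_def)

lemma G_coP5_free: "H_free P5_V coP5_E G_V G_E"
  by (rule G_H_free_if_no_induced_copy)
    (simp add: G_E_neighbours P_rel_def compl_rel_def del: One_nat_def)

lemma G_C5_free: "H_free C5_V C5_E G_V G_E"
  by (rule G_H_free_if_no_induced_copy) (simp add: G_E_neighbours C5_rel_def del: One_nat_def)

lemma G_simplicial_vertices: "{v \<in> G_V. simplicial G_V G_E v} = {1, 4}"
  unfolding G_V_eq simplicial_vertices_list by (simp add: G_E_neighbours del: One_nat_def)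

lemma G_antisimplicial_vertices: "{v \<in> G_V. antisimplicial G_V G_E v} = {2, 3}"
  unfolding G_V_eq antisimplicial_vertices_list by (simp add: G_E_neighbours del: One_nat_def)

lemma G_no_H6_copy:
  "\<not> has_induced_copy G_E H6_rel [] [(1, [1, 4]), (4, [1, 4]), (2, [2, 3]), (3, [2, 3]),
      (5, [1, 2, 3, 4, 5, 6, 7, 8, 9, 10, 11, 12]), (6, [1, 2, 3, 4, 5, 6, 7, 8, 9, 10, 11, 12])]"
  by (simp add: G_E_neighbours H6_rel_def doubleton_eq_iff del: One_nat_def)

lemma G_compl_no_H6_copy:
  "\<not> has_induced_copy (compl_rel G_E) H6_rel [] [(1, [2, 3]), (4, [2, 3]), (2, [1, 4]), (3, [1, 4]),
      (5, [1, 2, 3, 4, 5, 6, 7, 8, 9, 10, 11, 12]), (6, [1, 2, 3, 4, 5, 6, 7, 8, 9, 10, 11, 12])]"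
  by (simp add: G_E_neighbours compl_rel_def H6_rel_def doubleton_eq_iff del: One_nat_def)

lemma G_not_split: "\<not> split_graph G_V G_E"
  by (rule not_split_graph_if_induced_C4[of 2 6 5 10])
    (simp_all add: G_V_eq G_E_neighbours del: One_nat_def)

lemma G_self_complementary: "graph_iso phi G_V G_E G_V (compl_rel G_E)"
proof -
  have "map phi [1, 2, 3, 4, 5, 6, 7, 8, 9, 10, 11, 12] = [3, 1, 4, 2, 7, 5, 8, 6, 11, 9, 12, 10]"
    by (simp add: phi_def)
  then have "bij_betw phi G_V G_V"
    unfolding G_V_eq bij_betw_def by (auto simp: distinct_map[symmetric] simp del: One_nat_def)
  moreover have "\<forall>x\<in>G_V. \<forall>y\<in>G_V. G_E x y \<longleftrightarrow> compl_rel G_E (phi x) (phi y)"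
    unfolding G_V_eq by (simp add: G_E_neighbours compl_rel_def phi_def del: One_nat_def)
  ultimately show ?thesis by (simp add: graph_iso_def)
qed

lemma G_no_special_H6:
  assumes F: "F \<in> {G_E, compl_rel G_E}" and f: "induced_embedding f H6_V H6_rel G_V F"
    and "simplicial G_V F (f 1)" "simplicial G_V F (f 4)"
    and "antisimplicial G_V F (f 2)" "antisimplicial G_V F (f 3)"
  shows False
proof -
  let ?L = "[1, 2, 3, 4, 5, 6, 7, 8, 9, 10, 11, 12 :: nat]"
  obtain S A where
    S: "\<forall>v\<in>G_V. simplicial G_V F v \<longrightarrow> v \<in> set S" and
    A: "\<forall>v\<in>G_V. antisimplicial G_V F v \<longrightarrow> v \<in> set A" and
    no_copy: "\<not> has_induced_copy F H6_rel [] [(1, S), (4, S), (2, A), (3, A), (5, ?L), (6, ?L)]"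
  proof (cases "F = G_E")
    case True
    then show ?thesis
      using that[of "[1, 4]" "[2, 3]"] G_no_H6_copy G_simplicial_vertices G_antisimplicial_vertices
      by auto
  next
    case False
    with F have "F = compl_rel G_E" by simp
    then show ?thesis
      using that[of "[2, 3]" "[1, 4]"] G_compl_no_H6_copy G_simplicial_vertices
        G_antisimplicial_vertices simplicial_compl_iff_antisimplicial[OF G_simple]
        antisimplicial_compl_iff_simplicial[OF G_simple]
      by auto
  qed
  let ?hs = "[(1, S), (4, S), (2, A), (3, A), (5, ?L), (6, ?L)]"
  have "H6_V = fst ` set ?hs" by code_simp
  with f have "induced_embedding f (fst ` set ?hs) H6_rel G_V F" by simp
  then have "\<exists>(h, C) \<in> set ?hs. f h \<notin> set C"
    by (rule induced_embedding_misses_candidates[OF no_copy, rotated]) simp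
  then obtain h C where hC: "(h, C) \<in> set ?hs" and "f h \<notin> set C" by blast
  moreover have "f h \<in> G_V"
    using f hC \<open>H6_V = fst ` set ?hs\<close> by (auto simp: induced_embedding_def)
  moreover have "set ?L = G_V" by (simp add: G_V_eq)
  ultimately show False
    using hC assms(3-6) S A by auto
qed

theorem mainTheorem19:
  shows "simple_graph G_V G_E
    \<and> prime_graph G_V G_E
    \<and> H_free P5_V P5_E G_V G_E \<and> H_free P5_V coP5_E G_V G_E \<and> H_free C5_V C5_E G_V G_E
    \<and> \<not> split_graph G_V G_E
    \<and> graph_iso phi G_V G_E G_V (compl_rel G_E)
    \<and> {v\<in>G_V. simplicial G_V G_E v} = {1,4}
    \<and> {v\<in>G_V. antisimplicial G_V G_E v} = {2,3}
    \<and> \<not> (\<exists>F \<in> {G_E, compl_rel G_E}. \<exists>f. induced_embedding f H6_V H6_rel G_V F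
          \<and> simplicial G_V F (f 1) \<and> simplicial G_V F (f 4)
          \<and> antisimplicial G_V F (f 2) \<and> antisimplicial G_V F (f 3))"
  using G_simple G_prime G_P5_free G_coP5_free G_C5_free G_not_split G_self_complementary
    G_simplicial_vertices G_antisimplicial_vertices G_no_special_H6
  by blast

end
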